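(* Let $G$ be a context-free grammar over $B$ with axiom $S$, reduced to the nonterminals that are productive and reachable from $S$. Then $G$ is well-formed if and only if $G$ is bounded well-formed and the word $r_S$ associated with the axiom is $\varepsilon$.
   Context: Let $A$ be a finite alphabet of opening brackets, $\bar A=\{\bar a\mid a\in A\}$ a disjoint copy of closing brackets, $B=A\cup\bar A$. The reduction $\alpha a\bar a\beta\to\alpha\beta$ ($a\in A$; $\bar a a$ does not cancel) gives each $\alpha\in B^*$ a unique normal form $\rho(\alpha)$. A word $\alpha$ is well-formed if $\rho(\alpha)\in A^*$ and weakly well-formed if $\rho(\alpha)\in\bar A^*A^*$; a language is (weakly) well-formed if all its words are; a grammar $G$ is well-formed if $L(G)$ is, and weakly well-formed if $L(G)$ is. For $\alpha\in B^*$, $\mathrm{hd}(\alpha)=|\alpha|_A-|\alpha|_{\bar A}$. For a nonterminal $X$, $L_X$ is the language generated from $X$ and $d_X=\sup\{-\mathrm{hd}(\alpha')\mid \alpha'\alpha''\in L_X\}$. $G$ is bounded well-formed if it is weakly well-formed and for every nonterminal $X$ there is a (shortest) word $r_X\in A^*$ with $|r_X|=d_X$ such that $r_XL_X$ is well-formed. *)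

theory Defs
  imports Complex_Main "HOL-Library.Extended_Real"
begin

text \<open>Brackets: Op a is the opening bracket a in A, Cl a is its closing copy (a bar).
  The alphabet A is the (finite) type 'a.\<close>
datatype 'a br = Op 'a | Cl 'a

inductive red_step :: "'a br list \<Rightarrow> 'a br list \<Rightarrow> bool" where
  "red_step (u @ [Op a, Cl a] @ v) (u @ v)"

definition irreducible :: "'a br list \<Rightarrow> bool" where
  "irreducible w \<longleftrightarrow> (\<nexists>w'. red_step w w')"

definition rho :: "'a br list \<Rightarrow> 'a br list" where
  "rho w = (THE v. red_step\<^sup>*\<^sup>* w v \<and> irreducible v)"

definition is_open :: "'a br \<Rightarrow> bool" where
  "is_open x \<longleftrightarrow> (\<exists>a. x = Op a)"

definition is_close :: "'a br \<Rightarrow> bool" where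
  "is_close x \<longleftrightarrow> (\<exists>a. x = Cl a)"

definition well_formed :: "'a br list \<Rightarrow> bool" where
  "well_formed w \<longleftrightarrow> (\<forall>x \<in> set (rho w). is_open x)"

definition weakly_well_formed :: "'a br list \<Rightarrow> bool" where
  "weakly_well_formed w \<longleftrightarrow>
     (\<exists>u v. rho w = u @ v \<and> (\<forall>x \<in> set u. is_close x) \<and> (\<forall>x \<in> set v. is_open x))"

definition wf_lang :: "'a br list set \<Rightarrow> bool" where
  "wf_lang L \<longleftrightarrow> (\<forall>w \<in> L. well_formed w)"

definition wwf_lang :: "'a br list set \<Rightarrow> bool" where
  "wwf_lang L \<longleftrightarrow> (\<forall>w \<in> L. weakly_well_formed w)"

definition height :: "'a br list \<Rightarrow> int" where
  "height w = int (length (filter is_open w)) - int (length (filter is_close w))"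

text \<open>Context-free grammars over B: a finite set P of productions (X, rhs), where a right-hand
  side is a sentential form (Inl = nonterminal, Inr = terminal).\<close>
type_synonym ('n, 'a) prods = "('n \<times> ('n + 'a br) list) set"

inductive deriv_step :: "('n, 'a) prods \<Rightarrow> ('n + 'a br) list \<Rightarrow> ('n + 'a br) list \<Rightarrow> bool"
  for P where
  "(X, rhs) \<in> P \<Longrightarrow> deriv_step P (u @ [Inl X] @ v) (u @ rhs @ v)"

abbreviation derives :: "('n, 'a) prods \<Rightarrow> ('n + 'a br) list \<Rightarrow> ('n + 'a br) list \<Rightarrow> bool" where
  "derives P \<equiv> (deriv_step P)\<^sup>*\<^sup>*"

definition Lang :: "('n, 'a) prods \<Rightarrow> 'n \<Rightarrow> 'a br list set" where
  "Lang P X = {w. derives P [Inl X] (map Inr w)}"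

definition nts :: "('n, 'a) prods \<Rightarrow> 'n \<Rightarrow> 'n set" where
  "nts P S = {S} \<union> fst ` P \<union> {X. \<exists>(Y, rhs) \<in> P. Inl X \<in> set rhs}"

definition productive :: "('n, 'a) prods \<Rightarrow> 'n \<Rightarrow> bool" where
  "productive P X \<longleftrightarrow> Lang P X \<noteq> {}"

definition reachable :: "('n, 'a) prods \<Rightarrow> 'n \<Rightarrow> 'n \<Rightarrow> bool" where
  "reachable P S X \<longleftrightarrow> (\<exists>u v. derives P [Inl S] (u @ [Inl X] @ v))"

definition reduced :: "('n, 'a) prods \<Rightarrow> 'n \<Rightarrow> bool" where
  "reduced P S \<longleftrightarrow> (\<forall>X \<in> nts P S. productive P X \<and> reachable P S X)"

definition wf_grammar :: "('n, 'a) prods \<Rightarrow> 'n \<Rightarrow> bool" where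
  "wf_grammar P S \<longleftrightarrow> wf_lang (Lang P S)"

definition wwf_grammar :: "('n, 'a) prods \<Rightarrow> 'n \<Rightarrow> bool" where
  "wwf_grammar P S \<longleftrightarrow> wwf_lang (Lang P S)"

definition dX :: "('n, 'a) prods \<Rightarrow> 'n \<Rightarrow> ereal" where
  "dX P X = Sup {ereal (of_int (- height u)) | u v. u @ v \<in> Lang P X}"

definition good_r :: "('n, 'a) prods \<Rightarrow> 'n \<Rightarrow> 'a list \<Rightarrow> bool" where
  "good_r P X r \<longleftrightarrow> ereal (of_nat (length r)) = dX P X
      \<and> wf_lang ((\<lambda>w. map Op r @ w) ` Lang P X)"

definition bounded_wf :: "('n, 'a) prods \<Rightarrow> 'n \<Rightarrow> bool" where
  "bounded_wf P S \<longleftrightarrow> wwf_grammar P S \<and> (\<forall>X \<in> nts P S. \<exists>r. good_r P X r)"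

definition r_word :: "('n, 'a) prods \<Rightarrow> 'n \<Rightarrow> 'a list" where
  "r_word P X = (SOME r. good_r P X r)"

end

(*
  Normal forms are computed by a stack machine: an opening bracket is pushed, a closing
  bracket cancels a matching opening bracket on top of the stack and is pushed otherwise.
  In a reduced grammar every nonterminal X has a terminal context, alpha L_X beta being
  contained in L_S. If G is well-formed, the stack after reading alpha consists of opening
  brackets only, and reading any w in L_X never takes the stack more than hd(alpha) below its
  initial height. So d_X is finite and attained, and the top d_X brackets of that stack form a
  word r_X with r_X L_X well-formed. For X = S the empty context gives d_S = 0, i.e. r_S is
  empty; conversely, r_S empty says that L_S itself is well-formed.
*)
theory Submission
  imports Defs
begin

text \<open>The stack is the normal form reversed: its head is the last letter of rho w.\<close>

fun stack_step :: "'a br list \<Rightarrow> 'a br \<Rightarrow> 'a br list" where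
  "stack_step (Op b # s) (Cl a) = (if a = b then s else Cl a # Op b # s)"
| "stack_step s x = x # s"

definition stack :: "'a br list \<Rightarrow> 'a br list" where
  "stack w = foldl stack_step [] w"

lemma stack_step_Op [simp]: "stack_step s (Op a) = Op a # s"
  by (cases s) auto

lemma stack_step_cases:
  fixes s :: "'a br list" and x :: "'a br"
  obtains (pop) a s' where "x = Cl a" "s = Op a # s'" "stack_step s x = s'"
  | (push) "stack_step s x = x # s" "\<And>a s'. x = Cl a \<Longrightarrow> s \<noteq> Op a # s'"
proof (cases "\<exists>a s'. x = Cl a \<and> s = Op a # s'")
  case True
  then show ?thesis using pop by auto
next
  case False
  then have "stack_step s x = x # s" by (cases "(s, x)" rule: stack_step.cases) auto
  then show ?thesis using push False by blast
qed

lemma red_step_append: "red_step x y \<Longrightarrow> red_step (p @ x @ s) (p @ y @ s)"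
  by (induction rule: red_step.induct) (metis append.assoc red_step.intros)

lemma red_steps_append: "red_step\<^sup>*\<^sup>* x y \<Longrightarrow> red_step\<^sup>*\<^sup>* (p @ x @ s) (p @ y @ s)"
  by (induction rule: rtranclp_induct) (auto intro: rtranclp.rtrancl_into_rtrancl red_step_append)

lemma irreducible_iff: "irreducible w \<longleftrightarrow> (\<nexists>u a v. w = u @ [Op a, Cl a] @ v)"
  by (auto simp: irreducible_def red_step.simps)

lemma irreducible_appendD: "irreducible (w @ z) \<Longrightarrow> irreducible w"
  using red_step_append[of _ _ "[]" z] by (auto simp: irreducible_def)

lemma stack_red_step: "red_step x y \<Longrightarrow> stack x = stack y"
  by (induction rule: red_step.induct) (simp add: stack_def)

lemma stack_red_steps: "red_step\<^sup>*\<^sup>* x y \<Longrightarrow> stack x = stack y"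
  by (induction rule: rtranclp_induct) (auto dest: stack_red_step)

lemma red_steps_rev_stack: "red_step\<^sup>*\<^sup>* w (rev (stack w))"
proof (induction w rule: rev_induct)
  case Nil
  show ?case by (simp add: stack_def)
next
  case (snoc x w)
  have "red_step\<^sup>*\<^sup>* (w @ [x]) (rev (stack w) @ [x])"
    using red_steps_append[OF snoc, of "[]" "[x]"] by simp
  moreover have "red_step\<^sup>*\<^sup>* (rev (stack w) @ [x]) (rev (stack_step (stack w) x))"
  proof (cases "stack w" x rule: stack_step_cases)
    case (pop a s')
    then have "red_step (rev (stack w) @ [x]) (rev s' @ [])"
      by (metis append.assoc append_Cons append_Nil red_step.intros rev.simps(2))
    with pop show ?thesis by simp
  qed simp
  ultimately show ?case by (simp add: stack_def)
qed

lemma irreducible_rev_stack_step: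
  assumes "irreducible (rev s)"
  shows "irreducible (rev (stack_step s x))"
proof (cases s x rule: stack_step_cases)
  case (pop a s')
  then show ?thesis using assms irreducible_appendD by auto
next
  case push
  show ?thesis unfolding irreducible_iff
  proof
    assume "\<exists>u a v. rev (stack_step s x) = u @ [Op a, Cl a] @ v"
    then obtain u a v where uav: "rev s @ [x] = u @ [Op a, Cl a] @ v"
      using push by auto
    show False
    proof (cases v rule: rev_exhaust)
      case Nil
      with uav have "rev s = u @ [Op a]" "x = Cl a" by simp_all
      with push(2)[of a "rev u"] show False by (metis rev_rev_ident rev.simps(2))
    next
      case (snoc v' y)
      with uav have "rev s = u @ [Op a, Cl a] @ v'" by simp
      with assms show False unfolding irreducible_iff by blast
    qed
  qed
qed

lemma irreducible_rev_stack: "irreducible (rev (stack w))"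
proof -
  have "irreducible (rev (foldl stack_step s w))" if "irreducible (rev s)" for s
    using that by (induction w arbitrary: s) (auto intro: irreducible_rev_stack_step)
  then show ?thesis by (simp add: stack_def irreducible_iff)
qed

lemma stack_irreducible: "irreducible v \<Longrightarrow> stack v = rev v"
proof (induction v rule: rev_induct)
  case Nil
  show ?case by (simp add: stack_def)
next
  case (snoc x w)
  then have IH: "stack w = rev w" using irreducible_appendD by blast
  show ?case
  proof (cases "stack w" x rule: stack_step_cases)
    case (pop a s')
    with IH have "w @ [x] = rev s' @ [Op a, Cl a] @ []"
      by (metis append.assoc append_Cons append_Nil append_Nil2 rev.simps(2) rev_rev_ident)
    with snoc.prems show ?thesis unfolding irreducible_iff by blast
  next
    case push
    then show ?thesis using IH by (simp add: stack_def)
  qed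
qed

lemma rho_eq_rev_stack: "rho w = rev (stack w)"
  unfolding rho_def
proof (rule the_equality)
  show "red_step\<^sup>*\<^sup>* w (rev (stack w)) \<and> irreducible (rev (stack w))"
    using red_steps_rev_stack irreducible_rev_stack by blast
next
  fix v assume "red_step\<^sup>*\<^sup>* w v \<and> irreducible v"
  then show "v = rev (stack w)" using stack_red_steps stack_irreducible by fastforce
qed

lemma well_formed_iff_stack: "well_formed w \<longleftrightarrow> (\<forall>x\<in>set (stack w). is_open x)"
  by (simp add: well_formed_def rho_eq_rev_stack)

lemma height_Nil [simp]: "height [] = 0"
  by (simp add: height_def)

lemma height_Op_Cons [simp]: "height (Op a # w) = height w + 1"
  by (simp add: height_def is_open_def is_close_def)

lemma height_Cl_Cons [simp]: "height (Cl a # w) = height w - 1"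
  by (simp add: height_def is_open_def is_close_def)

lemma height_append [simp]: "height (u @ v) = height u + height v"
  by (simp add: height_def)

lemma height_map_Op [simp]: "height (map Op t) = int (length t)"
  by (induction t) auto

lemma height_stack_step: "height (stack_step s x) = height s + height [x]"
  by (cases "(s, x)" rule: stack_step.cases; cases x) auto

lemma height_foldl_stack_step: "height (foldl stack_step s w) = height s + height w"
proof (induction w arbitrary: s)
  case (Cons x w)
  then show ?case using height_stack_step[of s x] height_append[of "[x]" w] by simp
qed simp

lemma height_stack: "height (stack w) = height w"
  by (simp add: stack_def height_foldl_stack_step)

lemma foldl_stack_step_map_Op: "foldl stack_step s (map Op t) = rev (map Op t) @ s"
  by (induction t arbitrary: s) auto

lemma opens_eq_map_Op: "\<forall>x\<in>set s. is_open x \<Longrightarrow> \<exists>t. s = map Op t"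
  by (simp add: ex_map_conv is_open_def)

lemma close_mem_foldl_stack_step:
  "y \<in> set s \<Longrightarrow> is_close y \<Longrightarrow> y \<in> set (foldl stack_step s w)"
proof (induction w arbitrary: s)
  case (Cons x w)
  have "y \<in> set (stack_step s x)"
    by (cases s x rule: stack_step_cases) (use Cons.prems in \<open>auto simp: is_close_def\<close>)
  then show ?case using Cons.IH Cons.prems by simp
qed simp

lemma well_formed_append_stack_opens:
  assumes "well_formed (u @ v)"
  shows "\<forall>x\<in>set (stack u). is_open x"
proof
  fix x assume x: "x \<in> set (stack u)"
  show "is_open x"
  proof (cases x)
    case (Cl a)
    then have "x \<in> set (foldl stack_step (stack u) v)"
      using close_mem_foldl_stack_step x by (auto simp: is_close_def)
    then show ?thesis
      using assms by (simp add: well_formed_iff_stack stack_def)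
  qed (simp add: is_open_def)
qed

lemma well_formed_append_height_nonneg: "well_formed (u @ v) \<Longrightarrow> 0 \<le> height u"
  by (metis height_map_Op height_stack of_nat_0_le_iff opens_eq_map_Op
      well_formed_append_stack_opens)

lemma foldl_stack_step_append_bottom:
  assumes "\<And>u v. w = u @ v \<Longrightarrow> 0 \<le> height s + height u"
  shows "foldl stack_step (s @ s0) w = foldl stack_step s w @ s0"
  using assms
proof (induction w arbitrary: s)
  case (Cons x w)
  have "stack_step (s @ s0) x = stack_step s x @ s0"
  proof (cases s)
    case Nil
    with Cons.prems[of "[x]" w] obtain a where "x = Op a" by (cases x) auto
    with Nil show ?thesis by simp
  next
    case (Cons y s')
    then show ?thesis by (cases y; cases x) auto
  qed
  moreover have "foldl stack_step (stack_step s x @ s0) w = foldl stack_step (stack_step s x) w @ s0"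
  proof (rule Cons.IH)
    fix u v assume "w = u @ v"
    then have "0 \<le> height s + height (x # u)" using Cons.prems[of "x # u" v] by simp
    then show "0 \<le> height (stack_step s x) + height u"
      using height_stack_step[of s x] height_append[of "[x]" u] by simp
  qed
  ultimately show ?case by simp
qed simp

definition deficit :: "'a br list set \<Rightarrow> ereal" where
  "deficit L = Sup {ereal (of_int (- height u)) | u v. u @ v \<in> L}"

lemma dX_eq_deficit: "dX P X = deficit (Lang P X)"
  by (simp add: dX_def deficit_def)

lemma deficit_attained:
  assumes "L \<noteq> {}" and bound: "\<And>u v. u @ v \<in> L \<Longrightarrow> - height u \<le> int b"
  obtains n where "n \<le> b" "deficit L = ereal n" "\<And>u v. u @ v \<in> L \<Longrightarrow> - height u \<le> int n"
proof -
  define I where "I = {n. \<exists>u v. u @ v \<in> L \<and> - height u = int n}"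
  obtain w0 where "w0 \<in> L" using assms(1) by blast
  then have "0 \<in> I" unfolding I_def by (intro CollectI exI[of _ "[]"] exI[of _ w0]) simp
  moreover have "\<forall>m. m \<in> I \<longrightarrow> m \<le> b" using bound by (force simp: I_def)
  ultimately obtain n where n: "n \<in> I" "\<forall>m. m \<in> I \<longrightarrow> m \<le> n"
    using Nat.ex_has_greatest_nat[of "\<lambda>m. m \<in> I"] by blast
  have max: "- height u \<le> int n" if uv: "u @ v \<in> L" for u v
  proof (cases "0 \<le> - height u")
    case True
    with uv have "nat (- height u) \<in> I" unfolding I_def by auto
    with n(2) True show ?thesis by auto
  qed simp
  have "deficit L = ereal n"
    unfolding deficit_def by (rule cSup_eq_maximum) (use n(1) max in \<open>force simp: I_def\<close>)+
  with that n(1) max \<open>\<forall>m. m \<in> I \<longrightarrow> m \<le> b\<close> show ?thesis by blast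
qed

lemma wf_context_obtains_wf_prefix:
  assumes "L \<noteq> {}" and wf_context: "\<And>w. w \<in> L \<Longrightarrow> well_formed (\<alpha> @ w @ \<beta>)"
  obtains r where "length r \<le> height \<alpha>" "deficit L = ereal (length r)"
    "wf_lang ((\<lambda>w. map Op r @ w) ` L)"
proof -
  obtain w0 where "w0 \<in> L" using assms(1) by blast
  with wf_context have "well_formed (\<alpha> @ w0 @ \<beta>)" .
  then obtain t where t: "stack \<alpha> = map Op t"
    using well_formed_append_stack_opens opens_eq_map_Op by blast
  then have height_\<alpha>: "height \<alpha> = int (length t)" using height_stack[of \<alpha>] by simp
  have "- height u \<le> int (length t)" if "u @ v \<in> L" for u v
    using well_formed_append_height_nonneg[of "\<alpha> @ u" "v @ \<beta>"] wf_context[OF that] height_\<alpha>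
    by simp
  then obtain n where n: "n \<le> length t" "deficit L = ereal n"
    and max: "\<And>u v. u @ v \<in> L \<Longrightarrow> - height u \<le> int n"
    using deficit_attained[OF assms(1)] by metis
  \<comment> \<open>Reading w never reaches below the top n brackets of the stack of alpha, so
    these n brackets alone already make w well-formed.\<close>
  define r where "r = rev (take n t)"
  have "well_formed (map Op r @ w)" if w: "w \<in> L" for w
  proof -
    have "stack (\<alpha> @ w) = foldl stack_step (map Op (take n t) @ map Op (drop n t)) w"
      using t by (simp add: stack_def flip: map_append)
    also have "\<dots> = foldl stack_step (map Op (take n t)) w @ map Op (drop n t)"
    proof (rule foldl_stack_step_append_bottom)
      fix u v assume "w = u @ v"
      with max w have "- height u \<le> int n" by blast
      with n(1) show "0 \<le> height (map Op (take n t)) + height u" by simp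
    qed
    finally have "\<forall>x\<in>set (foldl stack_step (map Op (take n t)) w). is_open x"
      using wf_context[OF w] well_formed_append_stack_opens[of "\<alpha> @ w" \<beta>] by simp
    moreover have "stack (map Op r @ w) = foldl stack_step (map Op (take n t)) w"
      by (simp add: stack_def foldl_stack_step_map_Op r_def rev_map)
    ultimately show ?thesis by (simp add: well_formed_iff_stack)
  qed
  moreover have "length r = n" using n(1) by (simp add: r_def)
  ultimately show ?thesis using that[of r] n height_\<alpha> by (simp add: wf_lang_def)
qed

lemma deriv_step_append: "deriv_step P x y \<Longrightarrow> deriv_step P (p @ x @ s) (p @ y @ s)"
  by (induction rule: deriv_step.induct) (metis append.assoc deriv_step.intros)

lemma derives_append_context: "derives P x y \<Longrightarrow> derives P (p @ x @ s) (p @ y @ s)"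
  by (induction rule: rtranclp_induct) (auto intro: rtranclp.rtrancl_into_rtrancl deriv_step_append)

lemma derives_append: "derives P a a' \<Longrightarrow> derives P b b' \<Longrightarrow> derives P (a @ b) (a' @ b')"
  using derives_append_context[of P a a' "[]" b] derives_append_context[of P b b' a' "[]"]
  by simp

lemma derives_from_axiom_nts: "derives P [Inl S] g \<Longrightarrow> Inl X \<in> set g \<Longrightarrow> X \<in> nts P S"
proof (induction g arbitrary: X rule: rtranclp_induct)
  case base
  then show ?case by (simp add: nts_def)
next
  case (step y z)
  from step.hyps(2) obtain Y rhs u v
    where prod: "(Y, rhs) \<in> P" and y: "y = u @ [Inl Y] @ v" and z: "z = u @ rhs @ v"
    by (auto elim: deriv_step.cases)
  show ?case
  proof (cases "Inl X \<in> set rhs")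
    case True
    with prod show ?thesis unfolding nts_def by blast
  next
    case False
    with step.prems y z have "Inl X \<in> set y" by auto
    then show ?thesis by (rule step.IH)
  qed
qed

lemma derives_terminal_word:
  "(\<And>X. Inl X \<in> set g \<Longrightarrow> productive P X) \<Longrightarrow> \<exists>w. derives P g (map Inr w)"
proof (induction g)
  case Nil
  have "derives P [] (map Inr [])" by simp
  then show ?case by blast
next
  case (Cons y g)
  then obtain w where w: "derives P g (map Inr w)" by auto
  obtain w0 where w0: "derives P [y] (map Inr w0)"
  proof (cases y)
    case (Inl X)
    with Cons.prems obtain w0 where "w0 \<in> Lang P X" by (auto simp: productive_def)
    with Inl that show ?thesis by (auto simp: Lang_def)
  next
    case (Inr t)
    with that[of "[t]"] show ?thesis by simp
  qed
  have "derives P ([y] @ g) (map Inr w0 @ map Inr w)" using derives_append[OF w0 w] .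
  then have "derives P (y # g) (map Inr (w0 @ w))" by simp
  then show ?case by blast
qed

lemma reduced_Lang_context:
  assumes "reduced P S" and "X \<in> nts P S"
  obtains \<alpha> \<beta> where "\<And>w. w \<in> Lang P X \<Longrightarrow> \<alpha> @ w @ \<beta> \<in> Lang P S"
proof -
  obtain u v where uv: "derives P [Inl S] (u @ [Inl X] @ v)"
    using assms unfolding reduced_def reachable_def by blast
  have "productive P Y" if "Inl Y \<in> set u \<or> Inl Y \<in> set v" for Y
    using that assms(1) derives_from_axiom_nts[OF uv, of Y] unfolding reduced_def by auto
  then obtain \<alpha> \<beta> where \<alpha>: "derives P u (map Inr \<alpha>)" and \<beta>: "derives P v (map Inr \<beta>)"
    using derives_terminal_word by metis
  have "\<alpha> @ w @ \<beta> \<in> Lang P S" if "w \<in> Lang P X" for w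
  proof -
    from that have "derives P [Inl X] (map Inr w)" by (simp add: Lang_def)
    with \<alpha> \<beta> have "derives P (u @ [Inl X] @ v) (map Inr \<alpha> @ map Inr w @ map Inr \<beta>)"
      by (intro derives_append)
    with uv show ?thesis by (simp add: Lang_def)
  qed
  with that show ?thesis by blast
qed

lemma well_formed_imp_weakly_well_formed: "well_formed w \<Longrightarrow> weakly_well_formed w"
  unfolding well_formed_def weakly_well_formed_def by (intro exI[of _ "[]"] exI[of _ "rho w"]) simp

lemma wf_grammar_ex_good_r:
  assumes "wf_grammar P S" and "reduced P S" and "X \<in> nts P S"
  shows "\<exists>r. good_r P X r"
proof -
  obtain \<alpha> \<beta> where ctx: "\<And>w. w \<in> Lang P X \<Longrightarrow> \<alpha> @ w @ \<beta> \<in> Lang P S"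
    using reduced_Lang_context[OF assms(2,3)] by blast
  have "Lang P X \<noteq> {}" using assms(2,3) by (simp add: reduced_def productive_def)
  moreover have "well_formed (\<alpha> @ w @ \<beta>)" if "w \<in> Lang P X" for w
    using ctx[OF that] assms(1) by (simp add: wf_grammar_def wf_lang_def)
  ultimately obtain r where "deficit (Lang P X) = ereal (length r)"
    and "wf_lang ((\<lambda>w. map Op r @ w) ` Lang P X)"
    by (rule wf_context_obtains_wf_prefix) blast+
  then show ?thesis by (auto simp: good_r_def dX_eq_deficit)
qed

lemma wf_grammar_good_r_axiom_Nil:
  fixes P :: "('n, 'a) prods"
  assumes "wf_grammar P S" and "reduced P S" and "good_r P S r"
  shows "r = []"
proof -
  have "Lang P S \<noteq> {}" using assms(2) by (simp add: reduced_def productive_def nts_def)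
  moreover have "well_formed ([] @ w @ [])" if "w \<in> Lang P S" for w
    using that assms(1) by (simp add: wf_grammar_def wf_lang_def)
  ultimately obtain r0 :: "'a list" where "length r0 \<le> height ([] :: 'a br list)"
    and "deficit (Lang P S) = ereal (length r0)"
    by (rule wf_context_obtains_wf_prefix) blast+
  then have "deficit (Lang P S) = 0" by simp
  with assms(3) show ?thesis by (simp add: good_r_def dX_eq_deficit)
qed

theorem lemma2:
  fixes P :: "('n, 'a :: finite) prods" and S :: 'n
  assumes "finite P"
    and "reduced P S"
  shows "wf_grammar P S \<longleftrightarrow> (bounded_wf P S \<and> r_word P S = [])"
proof
  assume wf: "wf_grammar P S"
  then have wwf: "wwf_grammar P S"
    by (simp add: wf_grammar_def wwf_grammar_def wf_lang_def wwf_lang_def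
        well_formed_imp_weakly_well_formed)
  have good: "\<forall>X \<in> nts P S. \<exists>r. good_r P X r"
    using wf_grammar_ex_good_r[OF wf assms(2)] by blast
  then have "\<exists>r. good_r P S r" by (simp add: nts_def)
  then have "good_r P S (r_word P S)" unfolding r_word_def by (rule someI_ex)
  then have "r_word P S = []" by (rule wf_grammar_good_r_axiom_Nil[OF wf assms(2)])
  with wwf good show "bounded_wf P S \<and> r_word P S = []" by (simp add: bounded_wf_def)
next
  assume bwf: "bounded_wf P S \<and> r_word P S = []"
  then have "\<exists>r. good_r P S r" by (simp add: bounded_wf_def nts_def)
  then have "good_r P S (r_word P S)" unfolding r_word_def by (rule someI_ex)
  with bwf show "wf_grammar P S" by (simp add: good_r_def wf_grammar_def)
qed

end
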